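(* Let $N,M_t,M_r$ be positive integers, $\mathbf G_t\in\mathbb C^{N\times M_t}$, $\mathbf G_r\in\mathbb C^{M_r\times N}$ arbitrary, $\alpha\in\mathbb C\setminus\{0\}$, $\sigma^2>0$, $T$ a positive integer, $\theta\in\mathbb R$, $\mathbf R\in\mathbb C^{M_t\times M_t}$ positive semidefinite, and $\mathbf\Phi=\mathrm{diag}(e^{j\phi_1},\dots,e^{j\phi_N})$, $\phi_n\in\mathbb R$, such that the denominator of $\widetilde{\mathrm{CRB}}_2(\mathbf R,\mathbf\Phi)$ is positive. Then $\|\mathbf b(\theta)\|^2=M_r$ and $\|\dot{\mathbf b}(\theta)\|^2=\frac{\pi^2\hat d^2\cos^2\theta\,M_r(M_r-1)(M_r+1)}{3\lambda^2}$, and if both $\|\mathbf p_r(\mathbf\Phi)\|^2=\|\mathbf G_r\mathbf\Phi^T\mathbf a(\theta)\|^2>\|\mathbf b(\theta)\|^2$ and $\|\dot{\mathbf p}_r(\mathbf\Phi)\|^2=\|\mathbf G_r\mathbf\Phi^T\dot{\mathbf a}(\theta)\|^2>\|\dot{\mathbf b}(\theta)\|^2$, then $\widetilde{\mathrm{CRB}}_1(\mathbf R,\mathbf\Phi)<\widetilde{\mathrm{CRB}}_2(\mathbf R,\mathbf\Phi)$.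
   Context: $j=\sqrt{-1}$. Fix $\hat d>0$, $\lambda>0$. $\mathbf a(\theta)\in\mathbb C^N$ has $n$-th entry $e^{j\pi(2n-N-1)\hat d\sin\theta/\lambda}$, $\mathbf b(\theta)\in\mathbb C^{M_r}$ has $m$-th entry $e^{j\pi(2m-M_r-1)\hat d\sin\theta/\lambda}$; $\dot{\mathbf a}(\theta)=\partial\mathbf a/\partial\theta=\frac{j\pi\hat d\cos\theta}{\lambda}\mathbf D_1\mathbf a(\theta)$, $\dot{\mathbf b}(\theta)=\frac{j\pi\hat d\cos\theta}{\lambda}\mathbf D_2\mathbf b(\theta)$ with $\mathbf D_1=\mathrm{diag}(1-N,3-N,\dots,N-1)$, $\mathbf D_2=\mathrm{diag}(1-M_r,3-M_r,\dots,M_r-1)$. Set $\mathbf p_t(\mathbf\Phi)=\mathbf G_t^T\mathbf\Phi^T\mathbf a(\theta)$, $\mathbf p_r(\mathbf\Phi)=\mathbf G_r\mathbf\Phi^T\mathbf a(\theta)$, $\dot{\mathbf p}_t(\mathbf\Phi)=\mathbf G_t^T\mathbf\Phi^T\dot{\mathbf a}(\theta)$, $\dot{\mathbf p}_r(\mathbf\Phi)=\mathbf G_r\mathbf\Phi^T\dot{\mathbf a}(\theta)$. The approximated CRBs for DoA estimation are $\widetilde{\mathrm{CRB}}_1(\mathbf R,\mathbf\Phi)=\frac{\sigma^2/(2T|\alpha|^2)}{\mathbf p_t^H\mathbf R^T\mathbf p_t\,\|\dot{\mathbf p}_r\|^2+\|\mathbf p_r\|^2\,\dot{\mathbf p}_t^H\mathbf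 R^T\dot{\mathbf p}_t}$ (fully-passive IRS) and $\widetilde{\mathrm{CRB}}_2(\mathbf R,\mathbf\Phi)=\frac{\sigma^2/(2T|\alpha|^2)}{\mathbf p_t^H\mathbf R^T\mathbf p_t\,\|\dot{\mathbf b}(\theta)\|^2+\|\mathbf b(\theta)\|^2\,\dot{\mathbf p}_t^H\mathbf R^T\dot{\mathbf p}_t}$ (semi-passive IRS), all $\mathbf p$'s evaluated at $\mathbf\Phi$. *)

theory Defs
  imports "HOL-Analysis.Analysis"
begin

text \<open>Vectors are functions nat => complex, indexed 1..n; matrices are
  nat => nat => complex, indexed from 1 (row, column).\<close>

definition vnorm2 :: "nat \<Rightarrow> (nat \<Rightarrow> complex) \<Rightarrow> real" where
  "vnorm2 n v = (\<Sum>i=1..n. (cmod (v i))\<^sup>2)"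

text \<open>Quadratic form p^H R^T p for an m x m matrix R.\<close>
definition qformT :: "nat \<Rightarrow> (nat \<Rightarrow> nat \<Rightarrow> complex) \<Rightarrow> (nat \<Rightarrow> complex) \<Rightarrow> complex" where
  "qformT m R p = (\<Sum>i=1..m. \<Sum>k=1..m. cnj (p i) * R k i * p k)"

definition psd :: "nat \<Rightarrow> (nat \<Rightarrow> nat \<Rightarrow> complex) \<Rightarrow> bool" where
  "psd m R \<longleftrightarrow> (\<forall>i\<in>{1..m}. \<forall>k\<in>{1..m}. R i k = cnj (R k i)) \<and>
     (\<forall>x. 0 \<le> Re (\<Sum>i=1..m. \<Sum>k=1..m. cnj (x i) * R i k * x k))"

definition steer :: "real \<Rightarrow> real \<Rightarrow> nat \<Rightarrow> real \<Rightarrow> nat \<Rightarrow> complex" where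
  "steer dh lam K th n =
     exp (\<i> * complex_of_real (pi * (2 * real n - real K - 1) * dh * sin th / lam))"

text \<open>Its derivative in theta: (j pi dhat cos theta / lambda) D steer, D = diag(1-K,3-K,..,K-1).\<close>
definition steer_dot :: "real \<Rightarrow> real \<Rightarrow> nat \<Rightarrow> real \<Rightarrow> nat \<Rightarrow> complex" where
  "steer_dot dh lam K th n =
     (\<i> * complex_of_real (pi * dh * cos th / lam)) *
       complex_of_real (2 * real n - real K - 1) * steer dh lam K th n"

text \<open>Phi^T v with Phi = diag(exp(j phi_1),...,exp(j phi_N)).\<close>
definition phiT :: "(nat \<Rightarrow> real) \<Rightarrow> (nat \<Rightarrow> complex) \<Rightarrow> nat \<Rightarrow> complex" where
  "phiT phi v n = exp (\<i> * complex_of_real (phi n)) * v n"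

definition mulT :: "nat \<Rightarrow> (nat \<Rightarrow> nat \<Rightarrow> complex) \<Rightarrow> (nat \<Rightarrow> complex) \<Rightarrow> nat \<Rightarrow> complex" where
  "mulT N G w m = (\<Sum>n=1..N. G n m * w n)"

definition mulv :: "nat \<Rightarrow> (nat \<Rightarrow> nat \<Rightarrow> complex) \<Rightarrow> (nat \<Rightarrow> complex) \<Rightarrow> nat \<Rightarrow> complex" where
  "mulv N G w m = (\<Sum>n=1..N. G m n * w n)"

definition p_t where "p_t dh lam N Gt phi th = mulT N Gt (phiT phi (steer dh lam N th))"
definition p_r where "p_r dh lam N Gr phi th = mulv N Gr (phiT phi (steer dh lam N th))"
definition pdot_t where "pdot_t dh lam N Gt phi th = mulT N Gt (phiT phi (steer_dot dh lam N th))"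
definition pdot_r where "pdot_r dh lam N Gr phi th = mulv N Gr (phiT phi (steer_dot dh lam N th))"

definition crb1_den :: "real \<Rightarrow> real \<Rightarrow> nat \<Rightarrow> nat \<Rightarrow> nat \<Rightarrow> (nat \<Rightarrow> nat \<Rightarrow> complex) \<Rightarrow>
    (nat \<Rightarrow> nat \<Rightarrow> complex) \<Rightarrow> (nat \<Rightarrow> nat \<Rightarrow> complex) \<Rightarrow> (nat \<Rightarrow> real) \<Rightarrow> real \<Rightarrow> real" where
  "crb1_den dh lam N Mt Mr Gt Gr R phi th =
     Re (qformT Mt R (p_t dh lam N Gt phi th)) * vnorm2 Mr (pdot_r dh lam N Gr phi th)
     + vnorm2 Mr (p_r dh lam N Gr phi th) * Re (qformT Mt R (pdot_t dh lam N Gt phi th))"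

definition crb2_den :: "real \<Rightarrow> real \<Rightarrow> nat \<Rightarrow> nat \<Rightarrow> nat \<Rightarrow> (nat \<Rightarrow> nat \<Rightarrow> complex) \<Rightarrow>
    (nat \<Rightarrow> nat \<Rightarrow> complex) \<Rightarrow> (nat \<Rightarrow> real) \<Rightarrow> real \<Rightarrow> real" where
  "crb2_den dh lam N Mt Mr Gt R phi th =
     Re (qformT Mt R (p_t dh lam N Gt phi th)) * vnorm2 Mr (steer_dot dh lam Mr th)
     + vnorm2 Mr (steer dh lam Mr th) * Re (qformT Mt R (pdot_t dh lam N Gt phi th))"

definition crb1 where
  "crb1 sigma2 T alpha dh lam N Mt Mr Gt Gr R phi th =
     (sigma2 / (2 * real T * (cmod alpha)\<^sup>2)) / crb1_den dh lam N Mt Mr Gt Gr R phi th"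

definition crb2 where
  "crb2 sigma2 T alpha dh lam N Mt Mr Gt R phi th =
     (sigma2 / (2 * real T * (cmod alpha)\<^sup>2)) / crb2_den dh lam N Mt Mr Gt R phi th"

end

theory Submission
  imports Defs
begin

text \<open>The steering vectors have unimodular entries, so their squared norms are \<open>K\<close> and
  \<open>(\<pi> d cos \<theta> / \<lambda>)\<^sup>2 \<Sum> (2n - K - 1)\<^sup>2\<close>. The quadratic forms in both CRB denominators are
  nonnegative because \<open>R\<close> is positive semidefinite, and at least one of them is positive since
  the semi-passive denominator is; hence strictly larger receive gains make the fully-passive
  denominator strictly larger and its CRB strictly smaller.\<close>

lemma sum_even_shifted_squares:
  "(\<Sum>n=1..M. (2 * real n - c)\<^sup>2)
     = real M * (2 * (real M + 1) * (2 * real M + 1) / 3 - 2 * c * (real M + 1) + c\<^sup>2)"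
  by (induction M) (simp_all add: power2_eq_square field_simps)

lemma sum_centered_odd_squares:
  "(\<Sum>n=1..M. (2 * real n - real M - 1)\<^sup>2) = real M * (real M - 1) * (real M + 1) / 3"
  using sum_even_shifted_squares [where c = "real M + 1" and M = M]
  by (simp add: power2_eq_square field_simps)

lemma cmod_steer: "cmod (steer dh lam K th n) = 1"
  unfolding steer_def by (simp add: norm_exp_i_times)

lemma cmod_steer_dot_squared:
  "(cmod (steer_dot dh lam K th n))\<^sup>2 = (pi * dh * cos th / lam)\<^sup>2 * (2 * real n - real K - 1)\<^sup>2"
  unfolding steer_dot_def norm_mult norm_ii norm_of_real cmod_steer
  by (simp add: power_mult_distrib power_divide)

lemma vnorm2_steer: "vnorm2 K (steer dh lam K th) = real K"
  unfolding vnorm2_def cmod_steer by simp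

lemma vnorm2_steer_dot:
  "vnorm2 K (steer_dot dh lam K th) =
     pi\<^sup>2 * dh\<^sup>2 * (cos th)\<^sup>2 * real K * (real K - 1) * (real K + 1) / (3 * lam\<^sup>2)"
proof -
  have "vnorm2 K (steer_dot dh lam K th)
      = (pi * dh * cos th / lam)\<^sup>2 * (\<Sum>n=1..K. (2 * real n - real K - 1)\<^sup>2)"
    unfolding vnorm2_def cmod_steer_dot_squared by (rule sum_distrib_left [symmetric])
  also have "\<dots> = (pi * dh * cos th / lam)\<^sup>2 * (real K * (real K - 1) * (real K + 1) / 3)"
    unfolding sum_centered_odd_squares ..
  finally show ?thesis
    by (simp add: power_divide power_mult_distrib)
qed

text \<open>\<open>p\<^sup>H R\<^sup>T p\<close> is the quadratic form of \<open>R\<close> at the conjugate vector \<open>cnj \<circ> p\<close>.\<close>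

lemma qformT_nonneg:
  assumes "psd m R"
  shows "0 \<le> Re (qformT m R p)"
proof -
  have "qformT m R p = (\<Sum>i=1..m. \<Sum>k=1..m. cnj (cnj (p i)) * R i k * cnj (p k))"
    unfolding qformT_def by (subst sum.swap) (simp add: mult_ac)
  moreover have "0 \<le> Re (\<Sum>i=1..m. \<Sum>k=1..m. cnj (cnj (p i)) * R i k * cnj (p k))"
    using assms unfolding psd_def by (rule conjunct2 [THEN spec])
  ultimately show ?thesis
    by (simp only:)
qed

lemma weighted_sum_strict_mono:
  fixes a b x y x' y' :: real
  assumes "0 \<le> a" "0 \<le> b" "0 < a * x + y * b" "x < x'" "y < y'"
  shows "a * x + y * b < a * x' + y' * b"
proof -
  have "0 < a \<or> 0 < b"
    using assms(1-3) by (cases "a = 0"; cases "b = 0") (auto simp: less_le)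
  then have "0 < a * (x' - x) + b * (y' - y)"
    using assms(1,2,4,5) by (auto intro: add_pos_nonneg add_nonneg_pos)
  then show ?thesis
    by (simp add: algebra_simps)
qed

theorem proposition5:
  fixes N Mt Mr T :: nat and dh lam sigma2 th :: real and alpha :: complex
    and Gt Gr R :: "nat \<Rightarrow> nat \<Rightarrow> complex" and phi :: "nat \<Rightarrow> real"
  assumes "N > 0" and "Mt > 0" and "Mr > 0" and "T > 0"
    and "dh > 0" and "lam > 0" and "alpha \<noteq> 0" and "sigma2 > 0"
    and "psd Mt R"
    and "crb2_den dh lam N Mt Mr Gt R phi th > 0"
  shows "vnorm2 Mr (steer dh lam Mr th) = real Mr
    \<and> vnorm2 Mr (steer_dot dh lam Mr th) =
        pi\<^sup>2 * dh\<^sup>2 * (cos th)\<^sup>2 * real Mr * (real Mr - 1) * (real Mr + 1) / (3 * lam\<^sup>2)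
    \<and> ((vnorm2 Mr (p_r dh lam N Gr phi th) > vnorm2 Mr (steer dh lam Mr th)
         \<and> vnorm2 Mr (pdot_r dh lam N Gr phi th) > vnorm2 Mr (steer_dot dh lam Mr th))
       \<longrightarrow> crb1 sigma2 T alpha dh lam N Mt Mr Gt Gr R phi th
           < crb2 sigma2 T alpha dh lam N Mt Mr Gt R phi th)"
proof (intro conjI impI)
  show "vnorm2 Mr (steer dh lam Mr th) = real Mr"
    by (rule vnorm2_steer)
  show "vnorm2 Mr (steer_dot dh lam Mr th) =
      pi\<^sup>2 * dh\<^sup>2 * (cos th)\<^sup>2 * real Mr * (real Mr - 1) * (real Mr + 1) / (3 * lam\<^sup>2)"
    by (rule vnorm2_steer_dot)
  assume gains: "vnorm2 Mr (p_r dh lam N Gr phi th) > vnorm2 Mr (steer dh lam Mr th)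
    \<and> vnorm2 Mr (pdot_r dh lam N Gr phi th) > vnorm2 Mr (steer_dot dh lam Mr th)"
  have den_less: "crb2_den dh lam N Mt Mr Gt R phi th < crb1_den dh lam N Mt Mr Gt Gr R phi th"
    using assms(10) gains unfolding crb1_den_def crb2_den_def
    by (intro weighted_sum_strict_mono qformT_nonneg \<open>psd Mt R\<close>) auto
  have den_prod_pos: "0 < crb1_den dh lam N Mt Mr Gt Gr R phi th * crb2_den dh lam N Mt Mr Gt R phi th"
    using den_less assms(10) by (intro mult_pos_pos) simp_all
  have "0 < sigma2 / (2 * real T * (cmod alpha)\<^sup>2)"
    using assms by simp
  with den_less den_prod_pos show "crb1 sigma2 T alpha dh lam N Mt Mr Gt Gr R phi th
      < crb2 sigma2 T alpha dh lam N Mt Mr Gt R phi th"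
    unfolding crb1_def crb2_def by (intro divide_strict_left_mono)
qed

end
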